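(* Let $X$ be a finite set and $\mathcal{F}$ a symmetric clone on $X$ with $r(\mathcal{F})=3$. Let $f^*\in\mathcal{F}_{[3]}$ be not a monarchy and let $\bar a\in X^3$ be without repetition such that $f^*(\bar a')=a'_1$ for every permutation $\bar a'=(a'_1,a'_2,a'_3)$ of $\bar a$, but it is not the case that $f^*(\bar b)=b_1$ for all $\bar b\in X^3$ that are not one-to-one. Then there is $g\in\mathcal{F}_{[3]}$ satisfying (a) or (b): (a) $g(\bar b)=b_1$ for every $\bar b\in X^3$ with a repetition, and $g(\bar a')=a'_2$ for every permutation $\bar a'$ of $\bar a$; (b) $g(\bar b)=g_{3;1,2}(\bar b)$ for every $\bar b\in X^3$ with a repetition, and $g(\bar a')=a'_1$ for every permutation $\bar a'$ of $\bar a$.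
   Context: A clone on $X$: set of finitary operations on $X$ containing all projections and closed under composition; $\mathcal{F}_{[r]}$ its $r$-place members. Symmetric: for $f\in\mathcal{F}_{[n]}$ and a permutation $\pi$ of $X$, $\bar x\mapsto\pi^{-1}(f(\pi x_1,\dots,\pi x_n))$ is in $\mathcal{F}$. A monarchy is a projection. $r(\mathcal{F})=\min\{r:\text{some } f\in\mathcal{F}_{[r]} \text{ is not a monarchy}\}$. $g_{3;1,2}(x_1,x_2,x_3)=x_2$ if $x_2=x_3$, and $x_1$ otherwise. *)

theory Defs
  imports "HOL-Combinatorics.Permutations"
begin

text \<open>An n-place operation on the ground type is represented as a function
  of type (nat => 'a) => 'a depending only on the arguments with index < n.
  A family of operations is given by F :: nat => ((nat => 'a) => 'a) set,
  F n being its n-place members.\<close>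

definition depends_below :: "nat \<Rightarrow> ((nat \<Rightarrow> 'a) \<Rightarrow> 'a) \<Rightarrow> bool" where
  "depends_below n f \<longleftrightarrow> (\<forall>x y. (\<forall>i<n. x i = y i) \<longrightarrow> f x = f y)"

definition is_clone :: "(nat \<Rightarrow> ((nat \<Rightarrow> 'a) \<Rightarrow> 'a) set) \<Rightarrow> bool" where
  "is_clone F \<longleftrightarrow>
     F 0 = {} \<and>
     (\<forall>n. \<forall>f\<in>F n. depends_below n f) \<and>
     (\<forall>n i. 1 \<le> n \<and> i < n \<longrightarrow> (\<lambda>x. x i) \<in> F n) \<and>
     (\<forall>m n f g. 1 \<le> m \<and> 1 \<le> n \<and> f \<in> F m \<and> (\<forall>j<m. g j \<in> F n)
        \<longrightarrow> (\<lambda>x. f (\<lambda>j. g j x)) \<in> F n)"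

definition symmetric_clone :: "(nat \<Rightarrow> ((nat \<Rightarrow> 'a) \<Rightarrow> 'a) set) \<Rightarrow> bool" where
  "symmetric_clone F \<longleftrightarrow>
     (\<forall>n f \<pi>. f \<in> F n \<and> bij \<pi> \<longrightarrow> (\<lambda>x. inv \<pi> (f (\<lambda>i. \<pi> (x i)))) \<in> F n)"

definition monarchy :: "nat \<Rightarrow> ((nat \<Rightarrow> 'a) \<Rightarrow> 'a) \<Rightarrow> bool" where
  "monarchy n f \<longleftrightarrow> (\<exists>i<n. \<forall>x. f x = x i)"

definition r_clone :: "(nat \<Rightarrow> ((nat \<Rightarrow> 'a) \<Rightarrow> 'a) set) \<Rightarrow> nat" where
  "r_clone F = (LEAST r. \<exists>f\<in>F r. \<not> monarchy r f)"

text \<open>g_{3;1,2}, with arguments indexed 0,1,2.\<close>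
definition g312 :: "(nat \<Rightarrow> 'a) \<Rightarrow> 'a" where
  "g312 x = (if x 1 = x 2 then x 1 else x 0)"

end

theory Submission
  imports Defs
begin

text \<open>Identifying two variables of a ternary member f of F yields a binary member, hence a
  projection since r(F) = 3. So on tuples with a repetition f is determined by the side to which
  each of f(x,x,y), f(x,y,x), f(y,x,x) projects. If this pattern is the majority (which is what
  g_{3;1,2} is on repetitions) or the second or third projection, g is f with permuted variables;
  the first projection is excluded by hypothesis; each of the four remaining patterns admits a
  witness f(t0,t1,t2) where one ti is f with permuted variables and the others are variables.
  The values of such a g on the permutations of a follow from f(a') = a'_1 alone.\<close>

definition triple :: "'a \<Rightarrow> 'a \<Rightarrow> 'a \<Rightarrow> nat \<Rightarrow> 'a" where
  "triple x y z = (\<lambda>i. if i = 0 then x else if i = 1 then y else z)"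

lemma triple_simps [simp]:
  "triple x y z 0 = x" "triple x y z 1 = y" "triple x y z (Suc 0) = y" "triple x y z 2 = z"
  by (simp_all add: triple_def)

definition agree_on_repetitions :: "((nat \<Rightarrow> 'a) \<Rightarrow> 'a) \<Rightarrow> ((nat \<Rightarrow> 'a) \<Rightarrow> 'a) \<Rightarrow> bool" where
  "agree_on_repetitions g h \<longleftrightarrow>
     (\<forall>x y. g (triple x x y) = h (triple x x y) \<and> g (triple x y x) = h (triple x y x)
       \<and> g (triple y x x) = h (triple y x x))"

definition first_on_rearrangements :: "((nat \<Rightarrow> 'a) \<Rightarrow> 'a) \<Rightarrow> 'a \<Rightarrow> 'a \<Rightarrow> 'a \<Rightarrow> bool" where
  "first_on_rearrangements f x y z \<longleftrightarrow>
     f (triple x y z) = x \<and> f (triple x z y) = x \<and> f (triple y x z) = y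
     \<and> f (triple y z x) = y \<and> f (triple z x y) = z \<and> f (triple z y x) = z"

text \<open>Alternatives (a) and (b), stated for every triple whose rearrangements f maps to their
  first entries instead of just for the permutations of a.\<close>

definition ab_witness :: "((nat \<Rightarrow> 'a) \<Rightarrow> 'a) \<Rightarrow> ((nat \<Rightarrow> 'a) \<Rightarrow> 'a) \<Rightarrow> bool" where
  "ab_witness f g \<longleftrightarrow>
     agree_on_repetitions g (\<lambda>b. b 0)
       \<and> (\<forall>x y z. first_on_rearrangements f x y z \<longrightarrow> g (triple x y z) = y)
   \<or> agree_on_repetitions g g312
       \<and> (\<forall>x y z. first_on_rearrangements f x y z \<longrightarrow> g (triple x y z) = x)"

lemma g312_repetitions [simp]:
  "g312 (triple x x y) = x" "g312 (triple x y x) = x" "g312 (triple y x x) = x"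
  by (simp_all add: g312_def)

lemma depends_below_triple:
  assumes "depends_below 3 f"
  shows "f b = f (triple (b 0) (b 1) (b 2))"
  using assms unfolding depends_below_def
  by (elim allE impE) (auto simp: triple_def less_Suc_eq numeral_3_eq_3 numeral_2_eq_2)

lemma clone_depends_below: "is_clone F \<Longrightarrow> f \<in> F n \<Longrightarrow> depends_below n f"
  unfolding is_clone_def by blast

lemma clone_projection: "is_clone F \<Longrightarrow> i < n \<Longrightarrow> (\<lambda>x. x i) \<in> F n"
  unfolding is_clone_def by auto

lemma clone_compose_ternary:
  assumes "is_clone F" "f \<in> F 3" "1 \<le> n" "g\<^sub>0 \<in> F n" "g\<^sub>1 \<in> F n" "g\<^sub>2 \<in> F n"
  shows "(\<lambda>x. f (triple (g\<^sub>0 x) (g\<^sub>1 x) (g\<^sub>2 x))) \<in> F n"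
proof -
  define g where "g = triple g\<^sub>0 g\<^sub>1 g\<^sub>2"
  have "\<forall>j<3. g j \<in> F n"
    using assms by (auto simp: g_def triple_def)
  then have "(\<lambda>x. f (\<lambda>j. g j x)) \<in> F n"
    using assms unfolding is_clone_def by (metis one_le_numeral)
  moreover have "(\<lambda>j. g j x) = triple (g\<^sub>0 x) (g\<^sub>1 x) (g\<^sub>2 x)" for x
    by (auto simp: g_def triple_def)
  ultimately show ?thesis by simp
qed

lemma monarchy_below_r_clone:
  assumes "n < r_clone F" "f \<in> F n"
  shows "monarchy n f"
proof (rule ccontr)
  assume "\<not> monarchy n f"
  with assms(2) have "r_clone F \<le> n"
    unfolding r_clone_def by (blast intro: Least_le)
  with assms(1) show False by simp
qed

lemma binary_projection:
  assumes "2 < r_clone F" "h \<in> F 2"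
  shows "(\<forall>x y. h (triple x y y) = x) \<or> (\<forall>x y. h (triple x y y) = y)"
proof -
  obtain i where "i < 2" "\<forall>x. h x = x i"
    using monarchy_below_r_clone[OF assms] unfolding monarchy_def by blast
  then show ?thesis by (auto dest: less_2_cases)
qed

lemma identification_minors:
  assumes F: "is_clone F" "2 < r_clone F" and f: "f \<in> F 3"
  shows "(\<forall>x y. f (triple x x y) = x) \<or> (\<forall>x y. f (triple x x y) = y)"
    and "(\<forall>x y. f (triple x y x) = x) \<or> (\<forall>x y. f (triple x y x) = y)"
    and "(\<forall>x y. f (triple y x x) = x) \<or> (\<forall>x y. f (triple y x x) = y)"
proof -
  have minor: "(\<lambda>x. f (triple (x i) (x j) (x k))) \<in> F 2" if "i < 2" "j < 2" "k < 2" for i j k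
    using that by (intro clone_compose_ternary[OF F(1) f] clone_projection[OF F(1)]) simp_all
  show "(\<forall>x y. f (triple x x y) = x) \<or> (\<forall>x y. f (triple x x y) = y)"
    using binary_projection[OF F(2) minor[of 0 0 1]] by simp
  show "(\<forall>x y. f (triple x y x) = x) \<or> (\<forall>x y. f (triple x y x) = y)"
    using binary_projection[OF F(2) minor[of 0 1 0]] by simp
  show "(\<forall>x y. f (triple y x x) = x) \<or> (\<forall>x y. f (triple y x x) = y)"
    using binary_projection[OF F(2) minor[of 1 0 0]] by simp
qed

lemma non_injective_triple_cases: "\<not> inj_on b {0..<3::nat} \<Longrightarrow> b 0 = b 1 \<or> b 0 = b 2 \<or> b 1 = b 2"
  unfolding inj_on_def by (auto simp: less_Suc_eq numeral_3_eq_3 numeral_2_eq_2)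

lemma agree_on_repetitions_non_injective:
  assumes "depends_below 3 g" "depends_below 3 h" "agree_on_repetitions g h"
    and "\<not> inj_on b {0..<3}"
  shows "g b = h b"
proof -
  have "g (triple (b 0) (b 1) (b 2)) = h (triple (b 0) (b 1) (b 2))"
    using non_injective_triple_cases[OF assms(4)] assms(3) unfolding agree_on_repetitions_def
    by (elim disjE) metis+
  then show ?thesis
    using depends_below_triple assms(1,2) by metis
qed

lemma permutes_first_on_rearrangements:
  assumes F: "is_clone F" "f \<in> F 3"
    and first: "\<forall>\<sigma>. \<sigma> permutes {0..<3} \<longrightarrow> f (a \<circ> \<sigma>) = a (\<sigma> 0)"
    and \<sigma>: "\<sigma> permutes {0..<3::nat}"
  shows "first_on_rearrangements f (a (\<sigma> 0)) (a (\<sigma> 1)) (a (\<sigma> 2))"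
proof -
  have rearranged: "f (triple (a (\<sigma> (\<tau> 0))) (a (\<sigma> (\<tau> 1))) (a (\<sigma> (\<tau> 2)))) = a (\<sigma> (\<tau> 0))"
    if "\<tau> permutes {0..<3}" for \<tau>
  proof -
    have "f (a \<circ> (\<sigma> \<circ> \<tau>)) = a (\<sigma> (\<tau> 0))"
      using first permutes_compose[OF that \<sigma>] by simp
    then show ?thesis
      using depends_below_triple[OF clone_depends_below[OF F], of "a \<circ> (\<sigma> \<circ> \<tau>)"] by simp
  qed
  have swap: "transpose i j permutes {0..<3::nat}" if "i < 3" "j < 3" for i j
    using that by (intro permutes_swap_id) auto
  show ?thesis
    unfolding first_on_rearrangements_def
    using rearranged[OF permutes_id] rearranged[OF swap[of 1 2]]
      rearranged[OF swap[of 0 1]] rearranged[OF permutes_compose[OF swap[of 1 2] swap[of 0 1]]]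
      rearranged[OF permutes_compose[OF swap[of 0 1] swap[of 1 2]]] rearranged[OF swap[of 0 2]]
    by simp
qed

lemma ab_witness_of_majority_or_projection:
  assumes F: "is_clone F" "f \<in> F 3"
    and "agree_on_repetitions f g312 \<or> agree_on_repetitions f (\<lambda>b. b 1)
      \<or> agree_on_repetitions f (\<lambda>b. b 2)"
  shows "\<exists>g\<in>F 3. ab_witness f g"
proof -
  note defs = ab_witness_def agree_on_repetitions_def first_on_rearrangements_def
  note compose = clone_compose_ternary[OF F] clone_projection[OF F(1)]
  from assms(3) show ?thesis
  proof (elim disjE)
    assume "agree_on_repetitions f g312"
    then show ?thesis
      using F(2) by (intro bexI[of _ f]) (simp add: defs)
  next
    assume "agree_on_repetitions f (\<lambda>b. b 1)"
    then show ?thesis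
      by (intro bexI[of _ "\<lambda>x. f (triple (x 1) (x 0) (x 2))"]) (auto simp: defs intro!: compose)
  next
    assume "agree_on_repetitions f (\<lambda>b. b 2)"
    then show ?thesis
      by (intro bexI[of _ "\<lambda>x. f (triple (x 1) (x 2) (x 0))"]) (auto simp: defs intro!: compose)
  qed
qed

lemma ab_witness_of_non_projection:
  assumes F: "is_clone F" "2 < r_clone F" "f \<in> F 3"
    and not_majority: "\<not> agree_on_repetitions f g312"
    and not_projection: "\<not> agree_on_repetitions f (\<lambda>b. b 0)"
      "\<not> agree_on_repetitions f (\<lambda>b. b 1)" "\<not> agree_on_repetitions f (\<lambda>b. b 2)"
  shows "\<exists>g\<in>F 3. ab_witness f g"
proof -
  note defs = ab_witness_def agree_on_repetitions_def first_on_rearrangements_def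
  note compose = clone_compose_ternary[OF F(1,3)] clone_projection[OF F(1)]
  consider
      (merges_12) "\<forall>x y. f (triple x x y) = y" "\<forall>x y. f (triple x y x) = y"
        "\<forall>x y. f (triple y x x) = x"
    | (merges_02) "\<forall>x y. f (triple x x y) = y" "\<forall>x y. f (triple x y x) = x"
        "\<forall>x y. f (triple y x x) = y"
    | (merges_01) "\<forall>x y. f (triple x x y) = x" "\<forall>x y. f (triple x y x) = y"
        "\<forall>x y. f (triple y x x) = y"
    | (minority) "\<forall>x y. f (triple x x y) = y" "\<forall>x y. f (triple x y x) = y"
        "\<forall>x y. f (triple y x x) = y"
    using identification_minors[OF F] not_majority not_projection
    unfolding agree_on_repetitions_def all_conj_distrib triple_simps g312_repetitions by blast
  then show ?thesis
  proof cases
    case merges_12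
    show ?thesis
      by (intro bexI[of _ "\<lambda>x. f (triple (f (triple (x 0) (x 1) (x 2))) (x 1) (x 2))"])
        (auto simp: defs merges_12 intro!: compose)
  next
    case merges_02
    show ?thesis
      by (intro bexI[of _ "\<lambda>x. f (triple (x 0) (f (triple (x 1) (x 2) (x 0))) (x 1))"])
        (auto simp: defs merges_02 intro!: compose)
  next
    case merges_01
    show ?thesis
      by (intro bexI[of _ "\<lambda>x. f (triple (x 0) (x 1) (f (triple (x 1) (x 0) (x 2))))"])
        (auto simp: defs merges_01 intro!: compose)
  next
    case minority
    show ?thesis
      by (intro bexI[of _ "\<lambda>x. f (triple (x 1) (f (triple (x 0) (x 1) (x 2))) (x 2))"])
        (auto simp: defs minority intro!: compose)
  qed
qed

lemma ab_witness_exists: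
  assumes F: "is_clone F" "2 < r_clone F" "f \<in> F 3"
    and "\<not> (\<forall>b. \<not> inj_on b {0..<3} \<longrightarrow> f b = b 0)"
  shows "\<exists>g\<in>F 3. ab_witness f g"
proof (cases "agree_on_repetitions f g312 \<or> agree_on_repetitions f (\<lambda>b. b 1)
    \<or> agree_on_repetitions f (\<lambda>b. b 2)")
  case True
  then show ?thesis
    by (rule ab_witness_of_majority_or_projection[OF F(1,3)])
next
  case False
  have "depends_below 3 f" "depends_below 3 (\<lambda>b. b 0)"
    using clone_depends_below[OF F(1,3)] by (simp_all add: depends_below_def)
  then have "\<not> agree_on_repetitions f (\<lambda>b. b 0)"
    using assms(4) agree_on_repetitions_non_injective by blast
  with False show ?thesis
    using ab_witness_of_non_projection[OF F] by simp
qed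

lemma ab_witness_on_permutations:
  assumes F: "is_clone F" "f \<in> F 3" "g \<in> F 3"
    and first: "\<forall>\<sigma>. \<sigma> permutes {0..<3} \<longrightarrow> f (a \<circ> \<sigma>) = a (\<sigma> 0)"
    and "ab_witness f g"
  shows "((\<forall>b. \<not> inj_on b {0..<3} \<longrightarrow> g b = b 0) \<and>
      (\<forall>\<sigma>. \<sigma> permutes {0..<3} \<longrightarrow> g (a \<circ> \<sigma>) = a (\<sigma> 1)))
   \<or> ((\<forall>b. \<not> inj_on b {0..<3} \<longrightarrow> g b = g312 b) \<and>
      (\<forall>\<sigma>. \<sigma> permutes {0..<3} \<longrightarrow> g (a \<circ> \<sigma>) = a (\<sigma> 0)))"
proof -
  have dep: "depends_below 3 g" "depends_below 3 (\<lambda>b. b 0)" "depends_below 3 g312"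
    using clone_depends_below[OF F(1,3)] by (simp_all add: depends_below_def g312_def)
  have on_permutation: "g (a \<circ> \<sigma>) = g (triple (a (\<sigma> 0)) (a (\<sigma> 1)) (a (\<sigma> 2)))"
    "first_on_rearrangements f (a (\<sigma> 0)) (a (\<sigma> 1)) (a (\<sigma> 2))"
    if "\<sigma> permutes {0..<3}" for \<sigma>
    using depends_below_triple[OF dep(1), of "a \<circ> \<sigma>"]
      permutes_first_on_rearrangements[OF F(1,2) first that] by simp_all
  note on_repetition = agree_on_repetitions_non_injective[OF dep(1)]
  from \<open>ab_witness f g\<close> show ?thesis
    unfolding ab_witness_def
  proof (elim disjE conjE)
    assume "agree_on_repetitions g (\<lambda>b. b 0)"
      and "\<forall>x y z. first_on_rearrangements f x y z \<longrightarrow> g (triple x y z) = y"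
    then show ?thesis
      using on_permutation on_repetition[OF dep(2)] by auto
  next
    assume "agree_on_repetitions g g312"
      and "\<forall>x y z. first_on_rearrangements f x y z \<longrightarrow> g (triple x y z) = x"
    then show ?thesis
      using on_permutation on_repetition[OF dep(3)] by auto
  qed
qed

theorem claim2:
  fixes F :: "nat \<Rightarrow> (((nat \<Rightarrow> 'a::finite) \<Rightarrow> 'a) set)"
    and fs :: "(nat \<Rightarrow> 'a) \<Rightarrow> 'a"
    and a :: "nat \<Rightarrow> 'a"
  assumes "is_clone F" and "symmetric_clone F" and "r_clone F = 3"
    and "fs \<in> F 3" and "\<not> monarchy 3 fs"
    and "inj_on a {0..<3}"
    and "\<forall>\<sigma>. \<sigma> permutes {0..<3} \<longrightarrow> fs (a \<circ> \<sigma>) = a (\<sigma> 0)"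
    and "\<not> (\<forall>b. \<not> inj_on b {0..<3} \<longrightarrow> fs b = b 0)"
  shows "\<exists>g\<in>F 3.
     ((\<forall>b. \<not> inj_on b {0..<3} \<longrightarrow> g b = b 0) \<and>
      (\<forall>\<sigma>. \<sigma> permutes {0..<3} \<longrightarrow> g (a \<circ> \<sigma>) = a (\<sigma> 1)))
   \<or> ((\<forall>b. \<not> inj_on b {0..<3} \<longrightarrow> g b = g312 b) \<and>
      (\<forall>\<sigma>. \<sigma> permutes {0..<3} \<longrightarrow> g (a \<circ> \<sigma>) = a (\<sigma> 0)))"
proof -
  have "2 < r_clone F"
    using assms(3) by simp
  then obtain g where "g \<in> F 3" "ab_witness fs g"
    using ab_witness_exists[OF assms(1) _ assms(4,8)] by blast
  then show ?thesis
    using ab_witness_on_permutations[OF assms(1,4) _ assms(7)] by blast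
qed

end
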